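(* Let $A$ be a tca and $M$ an $A$-module. Suppose $a\in A$ and $m\in M$ satisfy $am=0$. Then there exists an integer $n\ge 1$ such that $a^n(gm)=0$ for all $g\in\mathrm{GL}_\infty(\mathbb{C})$.
   Context: $\mathrm{GL}_\infty=\bigcup_n\mathrm{GL}_n$. A representation of $\mathrm{GL}_\infty$ is polynomial if it is a subquotient of a direct sum of tensor powers of $\mathbb{C}^\infty$. A tca $A$ is a commutative unital $\mathbb{C}$-algebra with a $\mathrm{GL}_\infty$-action by algebra automorphisms making $A$ a polynomial representation; an $A$-module is a module $M$ with a compatible $\mathrm{GL}_\infty$-action ($g(ax)=(ga)(gx)$) making $M$ a polynomial representation. *)

theory Defs
  imports Complex_Main
begin

definition idm :: "nat \<Rightarrow> nat \<Rightarrow> complex" where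
  "idm i j = (if i = j then 1 else 0)"

definition mmul :: "(nat \<Rightarrow> nat \<Rightarrow> complex) \<Rightarrow> (nat \<Rightarrow> nat \<Rightarrow> complex) \<Rightarrow> nat \<Rightarrow> nat \<Rightarrow> complex" where
  "mmul g h i k = (\<Sum>j\<in>{j. h j k \<noteq> 0}. g i j * h j k)"

definition fin_block :: "nat \<Rightarrow> (nat \<Rightarrow> nat \<Rightarrow> complex) \<Rightarrow> bool" where
  "fin_block n g = (\<forall>i j. (n \<le> i \<or> n \<le> j) \<longrightarrow> g i j = idm i j)"

text \<open>GL_infinity = union of the GL_n (GL_n embedded as block matrices).\<close>
definition gl_inf :: "(nat \<Rightarrow> nat \<Rightarrow> complex) set" where
  "gl_inf = {g. \<exists>n. fin_block n g \<and>
      (\<exists>h. fin_block n h \<and> mmul g h = idm \<and> mmul h g = idm)}"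

definition gl_rep :: "(complex \<Rightarrow> 'v::ab_group_add \<Rightarrow> 'v) \<Rightarrow> ((nat \<Rightarrow> nat \<Rightarrow> complex) \<Rightarrow> 'v \<Rightarrow> 'v) \<Rightarrow> bool" where
  "gl_rep sc \<rho> = (vector_space sc \<and>
     (\<forall>g\<in>gl_inf. Vector_Spaces.linear sc sc (\<rho> g)) \<and>
     (\<forall>x. \<rho> idm x = x) \<and>
     (\<forall>g\<in>gl_inf. \<forall>h\<in>gl_inf. \<forall>x. \<rho> (mmul g h) x = \<rho> g (\<rho> h x)))"

text \<open>The k-th tensor power of C^infinity: finitely supported functions on index
  lists of length k (coefficients w.r.t. the basis e_{i1} (x) ... (x) e_{ik}),
  with the action g(e_{i1} (x) ... (x) e_{ik}) = g e_{i1} (x) ... (x) g e_{ik}.\<close>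
definition tens_act :: "(nat \<Rightarrow> nat \<Rightarrow> complex) \<Rightarrow> nat \<Rightarrow> (nat list \<Rightarrow> complex) \<Rightarrow> nat list \<Rightarrow> complex" where
  "tens_act g k t l = (if length l = k then
      (\<Sum>l'\<in>{l'. t l' \<noteq> 0}. (\<Prod>r<k. g (l ! r) (l' ! r)) * t l') else 0)"

text \<open>Direct sum over the index type 'j of tensor powers of degrees deg j.\<close>
definition dsum_space :: "('j \<Rightarrow> nat) \<Rightarrow> ('j \<Rightarrow> nat list \<Rightarrow> complex) set" where
  "dsum_space deg = {v. finite {(j, l). v j l \<noteq> 0} \<and>
      (\<forall>j l. v j l \<noteq> 0 \<longrightarrow> length l = deg j)}"

definition dsum_act :: "('j \<Rightarrow> nat) \<Rightarrow> (nat \<Rightarrow> nat \<Rightarrow> complex) \<Rightarrow> ('j \<Rightarrow> nat list \<Rightarrow> complex) \<Rightarrow> 'j \<Rightarrow> nat list \<Rightarrow> complex" where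
  "dsum_act deg g v = (\<lambda>j. tens_act g (deg j) (v j))"

text \<open>(W, f) presents (sc, rho) as a subquotient: W is a subrepresentation of the
  direct sum, and f : W -> V is a surjective equivariant linear map (V = W / ker f).\<close>
definition poly_pres :: "(complex \<Rightarrow> 'v::ab_group_add \<Rightarrow> 'v) \<Rightarrow> ((nat \<Rightarrow> nat \<Rightarrow> complex) \<Rightarrow> 'v \<Rightarrow> 'v)
    \<Rightarrow> ('j \<Rightarrow> nat) \<Rightarrow> ('j \<Rightarrow> nat list \<Rightarrow> complex) set \<Rightarrow> (('j \<Rightarrow> nat list \<Rightarrow> complex) \<Rightarrow> 'v) \<Rightarrow> bool" where
  "poly_pres sc \<rho> deg W f = (W \<subseteq> dsum_space deg \<and>
     (\<lambda>j l. 0) \<in> W \<and>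
     (\<forall>v\<in>W. \<forall>w\<in>W. (\<lambda>j l. v j l + w j l) \<in> W) \<and>
     (\<forall>c. \<forall>v\<in>W. (\<lambda>j l. c * v j l) \<in> W) \<and>
     (\<forall>g\<in>gl_inf. \<forall>v\<in>W. dsum_act deg g v \<in> W) \<and>
     (\<forall>v\<in>W. \<forall>w\<in>W. f (\<lambda>j l. v j l + w j l) = f v + f w) \<and>
     (\<forall>c. \<forall>v\<in>W. f (\<lambda>j l. c * v j l) = sc c (f v)) \<and>
     f ` W = UNIV \<and>
     (\<forall>g\<in>gl_inf. \<forall>v\<in>W. f (dsum_act deg g v) = \<rho> g (f v)))"

definition poly_rep :: "'j itself \<Rightarrow> (complex \<Rightarrow> 'v::ab_group_add \<Rightarrow> 'v) \<Rightarrow> ((nat \<Rightarrow> nat \<Rightarrow> complex) \<Rightarrow> 'v \<Rightarrow> 'v) \<Rightarrow> bool" where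
  "poly_rep J sc \<rho> = (gl_rep sc \<rho> \<and>
     (\<exists>(deg :: 'j \<Rightarrow> nat) W f. poly_pres sc \<rho> deg W f))"

text \<open>tca: commutative unital C-algebra (C-structure sA) with GL_infinity acting by
  algebra automorphisms, polynomial as a representation.\<close>
definition tca :: "'j itself \<Rightarrow> (complex \<Rightarrow> 'a::comm_ring_1 \<Rightarrow> 'a) \<Rightarrow> ((nat \<Rightarrow> nat \<Rightarrow> complex) \<Rightarrow> 'a \<Rightarrow> 'a) \<Rightarrow> bool" where
  "tca J sA \<rho>A = (vector_space sA \<and>
     (\<forall>c x y. sA c (x * y) = sA c x * y) \<and>
     poly_rep J sA \<rho>A \<and>
     (\<forall>g\<in>gl_inf. \<rho>A g 1 = 1 \<and> (\<forall>x y. \<rho>A g (x * y) = \<rho>A g x * \<rho>A g y)))"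

text \<open>A-module with compatible polynomial GL_infinity action; its C-structure is
  induced from A via c \<mapsto> c\<cdot>1.\<close>
definition tca_module :: "'k itself \<Rightarrow> (complex \<Rightarrow> 'a::comm_ring_1 \<Rightarrow> 'a) \<Rightarrow> ((nat \<Rightarrow> nat \<Rightarrow> complex) \<Rightarrow> 'a \<Rightarrow> 'a)
    \<Rightarrow> ('a \<Rightarrow> 'm::ab_group_add \<Rightarrow> 'm) \<Rightarrow> ((nat \<Rightarrow> nat \<Rightarrow> complex) \<Rightarrow> 'm \<Rightarrow> 'm) \<Rightarrow> bool" where
  "tca_module K sA \<rho>A act \<rho>M = (module act \<and>
     poly_rep K (\<lambda>c x. act (sA c 1) x) \<rho>M \<and>
     (\<forall>g\<in>gl_inf. \<forall>a x. \<rho>M g (act a x) = act (\<rho>A g a) (\<rho>M g x)))"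

end

theory Submission
  imports Defs "Jordan_Normal_Form.Char_Poly"
begin

(* Write g in GL_infinity as the endpoint of the line
   L(t) = (1 - t) I + t g; L(t) is invertible for all but finitely many t.  In a
   polynomial representation every matrix coefficient of L(t) acting on a tensor of
   degree d is a polynomial of degree <= d in t, so the orbit t |-> L(t) v is a
   polynomial sum_i t^i v_i of degree bounded by the degrees occurring in a lift of v,
   independently of g, with v_0 = v and sum_i v_i = g v.  Applying L(t) to a m = 0
   gives a(t) m(t) = 0 for infinitely many t, so the Cauchy product of the
   coefficients vanishes; with a_0 = a an induction gives a^(j+1) m_j = 0, and
   hence a^(E+1) (g m) = 0 where E bounds the degree of m(t). *)

subsection \<open>Block matrices and the line from the identity to g\<close>

lemma mmul_fin_block:
  assumes X: "fin_block n X" and Y: "fin_block n Y"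
  shows "mmul X Y i k = (if i < n \<and> k < n then (\<Sum>j<n. X i j * Y j k) else idm i k)"
proof (cases "k < n")
  case False
  then have Yk: "Y j k = idm j k" for j
    using Y unfolding fin_block_def by auto
  then have "{j. Y j k \<noteq> 0} = {k}"
    by (auto simp: idm_def)
  moreover have "X i k = idm i k"
    using X False unfolding fin_block_def by auto
  ultimately show ?thesis
    unfolding mmul_def using False by (simp add: Yk idm_def)
next
  case True
  have "Y j k = 0" if "n \<le> j" for j
    using Y True that unfolding fin_block_def idm_def by auto
  then have "{j. Y j k \<noteq> 0} \<subseteq> {..<n}"
    using not_le by blast
  then have sum_n: "mmul X Y i k = (\<Sum>j<n. X i j * Y j k)"
    unfolding mmul_def by (intro sum.mono_neutral_left) auto
  show ?thesis
  proof (cases "i < n")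
    case False
    then have "X i j = 0" if "j < n" for j
      using X that unfolding fin_block_def idm_def by auto
    then show ?thesis
      using sum_n False True by (simp add: idm_def)
  qed (use sum_n True in simp)
qed

lemma mmul_eq_idm_if_mat_mult_eq_one:
  assumes X: "fin_block n X" and Y: "fin_block n Y"
    and XY: "mat n n (\<lambda>(i, j). X i j) * mat n n (\<lambda>(i, j). Y i j) = 1\<^sub>m n"
  shows "mmul X Y = idm"
proof (intro ext)
  fix i k
  show "mmul X Y i k = idm i k"
  proof (cases "i < n \<and> k < n")
    case True
    then have "(\<Sum>j<n. X i j * Y j k) = (mat n n (\<lambda>(i, j). X i j) * mat n n (\<lambda>(i, j). Y i j)) $$ (i, k)"
      by (auto simp: scalar_prod_def intro!: sum.reindex_bij_witness[of _ id id])
    then show ?thesis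
      using True XY by (simp add: mmul_fin_block[OF X Y] idm_def)
  qed (use mmul_fin_block[OF X Y, of i k] in auto)
qed

lemma fin_block_in_gl_inf:
  assumes X: "fin_block n X" and det: "det (mat n n (\<lambda>(i, j). X i j)) \<noteq> 0"
  shows "X \<in> gl_inf"
proof -
  let ?X = "mat n n (\<lambda>(i, j). X i j)"
  have "?X \<in> Units (ring_mat TYPE(complex) n ())"
    by (rule det_non_zero_imp_unit[OF _ det]) auto
  then obtain H where H: "H \<in> carrier_mat n n" "?X * H = 1\<^sub>m n" "H * ?X = 1\<^sub>m n"
    unfolding Units_def ring_mat_def by auto
  define Y where "Y i j = (if i < n \<and> j < n then H $$ (i, j) else idm i j)" for i j
  have Y: "fin_block n Y"
    unfolding fin_block_def Y_def by auto
  have "mat n n (\<lambda>(i, j). Y i j) = H"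
    using H(1) by (intro eq_matI) (auto simp: Y_def)
  then have "mmul X Y = idm" and "mmul Y X = idm"
    using H X Y by (auto intro: mmul_eq_idm_if_mat_mult_eq_one)
  then show ?thesis
    unfolding gl_inf_def using X Y by blast
qed

lemma idm_in_gl_inf: "idm \<in> gl_inf"
proof -
  have block: "fin_block 0 idm"
    unfolding fin_block_def by simp
  then have "mmul idm idm = idm"
    by (intro ext) (simp add: mmul_fin_block)
  then show ?thesis
    unfolding gl_inf_def using block by blast
qed

definition line_mat :: "(nat \<Rightarrow> nat \<Rightarrow> complex) \<Rightarrow> complex \<Rightarrow> nat \<Rightarrow> nat \<Rightarrow> complex" where
  "line_mat g t i j = (1 - t) * idm i j + t * g i j"

lemma line_mat_0 [simp]: "line_mat g 0 = idm"
  by (intro ext) (simp add: line_mat_def)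

lemma line_mat_1 [simp]: "line_mat g 1 = g"
  by (intro ext) (simp add: line_mat_def)

lemma infinite_line_mat_in_gl_inf:
  assumes g: "fin_block n g"
  shows "infinite {t. line_mat g t \<in> gl_inf}"
proof -
  define G where "G = mat n n (\<lambda>(i, j). g i j)"
  have G: "G \<in> carrier_mat n n"
    unfolding G_def by auto
  define R where "R = {e. poly (char_poly G) e = 0}"
  have "char_poly G \<noteq> 0"
    using degree_monic_char_poly[OF G] by auto
  then have "finite R"
    unfolding R_def by (rule poly_roots_finite)
  moreover have "inj_on (\<lambda>t::complex. (t - 1) / t) {t. t \<noteq> 0}"
    by (rule inj_onI) (simp add: diff_divide_distrib)
  ultimately have fin: "finite ((\<lambda>t. (t - 1) / t) -` R \<inter> {t. t \<noteq> 0})"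
    by (rule finite_vimage_IntI)
  \<comment> \<open>\<open>(1 - t) I + t G = t (G - e I)\<close> with \<open>e = (t - 1) / t\<close>: singular only if \<open>t = 0\<close> or \<open>e\<close> is an eigenvalue of \<open>G\<close>.\<close>
  have "- {t. line_mat g t \<in> gl_inf} \<subseteq> insert 0 ((\<lambda>t. (t - 1) / t) -` R \<inter> {t. t \<noteq> 0})"
  proof (rule subsetI, rule ccontr)
    fix t
    assume "t \<in> - {t. line_mat g t \<in> gl_inf}"
      and "t \<notin> insert 0 ((\<lambda>t. (t - 1) / t) -` R \<inter> {t. t \<noteq> 0})"
    then have bad: "line_mat g t \<notin> gl_inf" and t: "t \<noteq> 0" and e: "(t - 1) / t \<notin> R"
      by auto
    have "det (char_matrix G ((t - 1) / t)) \<noteq> 0"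
      using e eigenvalue_root_char_poly[OF G] eigenvalue_det[OF G] unfolding R_def by auto
    moreover have "mat n n (\<lambda>(i, j). line_mat g t i j) = t \<cdot>\<^sub>m char_matrix G ((t - 1) / t)"
      using t G by (intro eq_matI) (auto simp: G_def char_matrix_def line_mat_def idm_def field_simps)
    ultimately have "det (mat n n (\<lambda>(i, j). line_mat g t i j)) \<noteq> 0"
      using t by simp
    moreover have "fin_block n (line_mat g t)"
      using g unfolding fin_block_def line_mat_def idm_def by auto
    ultimately show False
      using bad fin_block_in_gl_inf by blast
  qed
  then have "finite (- {t. line_mat g t \<in> gl_inf})"
    using fin finite_subset by blast
  then show ?thesis
    using infinite_UNIV_char_0[where 'a=complex] by (metis Compl_partition finite_UnI)
qed

subsection \<open>Lagrange interpolation\<close>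

definition lagrange_basis :: "'a::field set \<Rightarrow> 'a \<Rightarrow> 'a poly" where
  "lagrange_basis B b = (\<Prod>c\<in>B - {b}. Polynomial.smult (1 / (b - c)) [:- c, 1:])"

lemma poly_lagrange_basis:
  assumes "finite B" and "b \<in> B" and "c \<in> B"
  shows "poly (lagrange_basis B b) c = (if c = b then 1 else 0)"
proof (cases "c = b")
  case True
  have "poly (Polynomial.smult (1 / (b - x)) [:- x, 1:]) b = 1" if "x \<in> B - {b}" for x
    using that by (auto simp: field_simps)
  then show ?thesis
    unfolding lagrange_basis_def poly_prod using True by (auto intro!: prod.neutral)
next
  case False
  then have "c \<in> B - {b}"
    using assms by auto
  then show ?thesis
    unfolding lagrange_basis_def poly_prod using assms False
    by (auto intro!: prod_zero[OF _ bexI[of _ c]])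
qed

lemma degree_lagrange_basis:
  assumes "finite B" and "b \<in> B"
  shows "degree (lagrange_basis B b) \<le> card B - 1"
proof -
  have "degree (lagrange_basis B b) \<le> (\<Sum>c\<in>B - {b}. degree (Polynomial.smult (1 / (b - c)) [:- c, 1:]))"
    unfolding lagrange_basis_def using assms(1) by (rule degree_prod_sum_le[OF finite_Diff, unfolded comp_def])
  also have "\<dots> \<le> (\<Sum>c\<in>B - {b}. 1)"
    by (rule sum_mono) (simp add: degree_smult_le)
  also have "\<dots> = card B - 1"
    using assms by simp
  finally show ?thesis .
qed

lemma lagrange_interpolation:
  fixes Q :: "'a::field poly"
  assumes B: "finite B" and deg: "degree Q < card B"
  shows "Q = (\<Sum>b\<in>B. Polynomial.smult (poly Q b) (lagrange_basis B b))"
proof -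
  define R where "R = Q - (\<Sum>b\<in>B. Polynomial.smult (poly Q b) (lagrange_basis B b))"
  have "degree (\<Sum>b\<in>B. Polynomial.smult (poly Q b) (lagrange_basis B b)) \<le> card B - 1"
    using B degree_lagrange_basis[OF B]
    by (intro degree_sum_le) (auto intro: order.trans[OF degree_smult_le])
  then have "degree R \<le> card B - 1"
    unfolding R_def using deg by (intro degree_diff_le) auto
  then have deg_R: "degree R < card B"
    using deg by linarith
  have roots: "poly R c = 0" if "c \<in> B" for c
  proof -
    have "(\<Sum>b\<in>B. poly Q b * poly (lagrange_basis B b) c) = poly Q c"
      using B that by (simp add: poly_lagrange_basis if_distrib[of "\<lambda>x. _ * x"] cong: if_cong)
    then show ?thesis
      unfolding R_def by (simp add: poly_sum)
  qed
  have "R = 0"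
  proof (rule ccontr)
    assume "R \<noteq> 0"
    then have "card B \<le> card {c. poly R c = 0}"
      using roots by (intro card_mono poly_roots_finite) auto
    also have "\<dots> \<le> degree R"
      using \<open>R \<noteq> 0\<close> by (rule card_poly_roots_bound)
    finally show False
      using deg_R by simp
  qed
  then show ?thesis
    unfolding R_def by simp
qed

lemma coeff_eq_sum_lagrange_basis:
  fixes Q :: "'a::field poly"
  assumes "finite B" and "degree Q < card B"
  shows "coeff Q k = (\<Sum>b\<in>B. poly Q b * coeff (lagrange_basis B b) k)"
  using arg_cong[OF lagrange_interpolation[OF assms], of "\<lambda>p. coeff p k"] by (simp add: coeff_sum)

lemma (in Vector_Spaces.vector_space) sum_power_scale_eq_0_imp_eq_0:
  assumes T: "infinite T" and zero: "\<And>t. t \<in> T \<Longrightarrow> (\<Sum>i\<le>N. scale (t ^ i) (x i)) = 0"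
    and k: "k \<le> N"
  shows "x k = 0"
proof -
  obtain B where B: "finite B" "card B = Suc N" "B \<subseteq> T"
    using infinite_arbitrarily_large[OF T] by blast
  have delta: "(\<Sum>b\<in>B. b ^ i * coeff (lagrange_basis B b) k) = (if i = k then 1 else 0)" if "i \<le> N" for i
    using coeff_eq_sum_lagrange_basis[OF B(1), of "monom 1 i" k] that B(2)
    by (simp add: degree_monom_eq poly_monom)
  have "x k = (\<Sum>i\<le>N. scale (\<Sum>b\<in>B. b ^ i * coeff (lagrange_basis B b) k) (x i))"
    using k by (simp add: delta if_distrib[of "\<lambda>c. scale c _"] cong: if_cong)
  also have "\<dots> = (\<Sum>i\<le>N. \<Sum>b\<in>B. scale (coeff (lagrange_basis B b) k) (scale (b ^ i) (x i)))"
    by (simp add: scale_sum_left mult.commute)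
  also have "\<dots> = (\<Sum>b\<in>B. scale (coeff (lagrange_basis B b) k) (\<Sum>i\<le>N. scale (b ^ i) (x i)))"
    by (subst sum.swap) (simp add: scale_sum_right)
  also have "\<dots> = 0"
    using zero B(3) by (simp add: subset_iff)
  finally show ?thesis .
qed

lemma poly_eq_sum_coeff_le:
  fixes p :: "'a::comm_semiring_1 poly"
  assumes "degree p \<le> n"
  shows "poly p x = (\<Sum>i\<le>n. coeff p i * x ^ i)"
proof -
  have "poly p x = poly (\<Sum>i\<le>n. monom (coeff p i) i) x"
    using poly_as_sum_of_monoms'[OF assms] by simp
  then show ?thesis
    by (simp add: poly_sum poly_monom)
qed

subsection \<open>Orbits along lines in polynomial representations\<close>

lemma tens_act_line_mat_poly:
  assumes "finite {l'. u l' \<noteq> 0}"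
  obtains Q where "\<And>t l. tens_act (line_mat g t) k u l = poly (Q l) t" and "\<And>l. degree (Q l) \<le> k"
proof -
  define P where "P i j = [:idm i j, g i j - idm i j:]" for i j
  have poly_P: "poly (P i j) t = line_mat g t i j" for i j t
    by (simp add: P_def line_mat_def algebra_simps)
  define Q where "Q l = (if length l = k then
      (\<Sum>l'\<in>{l'. u l' \<noteq> 0}. Polynomial.smult (u l') (\<Prod>r<k. P (l ! r) (l' ! r))) else 0)" for l
  have "tens_act (line_mat g t) k u l = poly (Q l) t" for t l
    by (simp add: tens_act_def Q_def poly_sum poly_prod poly_P mult.commute)
  moreover have "degree (Q l) \<le> k" for l
  proof -
    have "degree (\<Prod>r<k. P (l ! r) (l' ! r)) \<le> (\<Sum>r<k. degree (P (l ! r) (l' ! r)))" for l'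
      by (rule degree_prod_sum_le[OF finite_lessThan, unfolded comp_def])
    also have "\<dots> l' \<le> (\<Sum>r<k. 1)" for l'
      by (rule sum_mono) (simp add: P_def)
    finally show ?thesis
      unfolding Q_def using assms by (auto intro!: degree_sum_le order.trans[OF degree_smult_le])
  qed
  ultimately show ?thesis
    using that by blast
qed

definition dsum_degree :: "('j \<Rightarrow> nat) \<Rightarrow> ('j \<Rightarrow> nat list \<Rightarrow> complex) \<Rightarrow> nat" where
  "dsum_degree deg v = Max (insert 0 ((\<lambda>(j, l). deg j) ` {(j, l). v j l \<noteq> 0}))"

lemma dsum_act_line_mat_poly:
  assumes v: "v \<in> dsum_space deg"
  obtains Q where "\<And>t j l. dsum_act deg (line_mat g t) v j l = poly (Q j l) t"
    and "\<And>j l. degree (Q j l) \<le> dsum_degree deg v"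
proof -
  have supp: "finite {(j, l). v j l \<noteq> 0}"
    using v unfolding dsum_space_def by auto
  have "\<forall>j. \<exists>Qj. (\<forall>t l. dsum_act deg (line_mat g t) v j l = poly (Qj l) t)
      \<and> (\<forall>l. degree (Qj l) \<le> dsum_degree deg v)"
  proof
    fix j
    show "\<exists>Qj. (\<forall>t l. dsum_act deg (line_mat g t) v j l = poly (Qj l) t)
        \<and> (\<forall>l. degree (Qj l) \<le> dsum_degree deg v)"
    proof (cases "\<exists>l. v j l \<noteq> 0")
      case True
      then obtain l0 where "v j l0 \<noteq> 0"
        by blast
      then have deg_le: "deg j \<le> dsum_degree deg v"
        unfolding dsum_degree_def using supp by (intro Max_ge) auto
      have "{l. v j l \<noteq> 0} \<subseteq> snd ` {(j, l). v j l \<noteq> 0}"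
        by force
      then have "finite {l. v j l \<noteq> 0}"
        using supp finite_surj by blast
      then obtain Qj where Qj: "\<And>t l. tens_act (line_mat g t) (deg j) (v j) l = poly (Qj l) t"
        and deg_Qj: "\<And>l. degree (Qj l) \<le> deg j"
        using tens_act_line_mat_poly[of "v j" g "deg j"] by blast
      have "degree (Qj l) \<le> dsum_degree deg v" for l
        using deg_Qj deg_le by (rule order.trans)
      then show ?thesis
        using Qj unfolding dsum_act_def by blast
    next
      case False
      then have "dsum_act deg (line_mat g t) v j l = poly 0 t" for t l
        unfolding dsum_act_def tens_act_def by auto
      then show ?thesis
        by (intro exI[of _ "\<lambda>l. 0"]) auto
    qed
  qed
  then obtain Q where "\<forall>j. (\<forall>t l. dsum_act deg (line_mat g t) v j l = poly (Q j l) t)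
      \<and> (\<forall>l. degree (Q j l) \<le> dsum_degree deg v)"
    by (rule choice[THEN exE])
  then show ?thesis
    using that by blast
qed

lemma poly_pres_zero:
  assumes "poly_pres sc \<rho> deg W f"
  shows "f (\<lambda>j l. 0) = 0"
proof -
  have zero: "(\<lambda>j l. 0) \<in> W" and add: "\<forall>v\<in>W. \<forall>w\<in>W. f (\<lambda>j l. v j l + w j l) = f v + f w"
    using assms unfolding poly_pres_def by blast+
  show ?thesis
    using add[rule_format, OF zero zero] by simp
qed

lemma poly_pres_lincomb:
  assumes pp: "poly_pres sc \<rho> deg W f" and "finite B" and "\<And>b. b \<in> B \<Longrightarrow> u b \<in> W"
  shows "(\<lambda>j l. \<Sum>b\<in>B. c b * u b j l) \<in> W \<and> f (\<lambda>j l. \<Sum>b\<in>B. c b * u b j l) = (\<Sum>b\<in>B. sc (c b) (f (u b)))"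
  using assms(2,3)
proof (induction B rule: finite_induct)
  case empty
  then show ?case
    using pp poly_pres_zero[OF pp] unfolding poly_pres_def by simp
next
  case (insert x F)
  have add: "\<And>v w. v \<in> W \<Longrightarrow> w \<in> W \<Longrightarrow> (\<lambda>j l. v j l + w j l) \<in> W \<and> f (\<lambda>j l. v j l + w j l) = f v + f w"
    and smult: "\<And>v. v \<in> W \<Longrightarrow> (\<lambda>j l. c x * v j l) \<in> W \<and> f (\<lambda>j l. c x * v j l) = sc (c x) (f v)"
    using pp unfolding poly_pres_def by blast+
  have "u x \<in> W" and IH: "(\<lambda>j l. \<Sum>b\<in>F. c b * u b j l) \<in> W \<and> f (\<lambda>j l. \<Sum>b\<in>F. c b * u b j l) = (\<Sum>b\<in>F. sc (c b) (f (u b)))"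
    using insert by auto
  then show ?case
    using add[OF conjunct1[OF smult] conjunct1[OF IH]] smult insert.hyps by simp
qed

definition line_orbit_degree_le ::
    "(complex \<Rightarrow> 'v::ab_group_add \<Rightarrow> 'v) \<Rightarrow> ((nat \<Rightarrow> nat \<Rightarrow> complex) \<Rightarrow> 'v \<Rightarrow> 'v) \<Rightarrow> 'v \<Rightarrow> nat \<Rightarrow> bool"
  where "line_orbit_degree_le sc \<rho> v E \<longleftrightarrow> (\<forall>g\<in>gl_inf. \<exists>x. (\<forall>i>E. x i = 0) \<and>
     (\<forall>t. line_mat g t \<in> gl_inf \<longrightarrow> \<rho> (line_mat g t) v = (\<Sum>i\<le>E. sc (t ^ i) (x i))))"

lemma poly_pres_line_orbit_degree_le:
  assumes pp: "poly_pres sc \<rho> deg W f" and w: "w \<in> W"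
  shows "line_orbit_degree_le sc \<rho> (f w) (dsum_degree deg w)"
  unfolding line_orbit_degree_le_def
proof
  fix g
  assume g: "g \<in> gl_inf"
  let ?E = "dsum_degree deg w"
  let ?v = "\<lambda>t. dsum_act deg (line_mat g t) w"
  have "w \<in> dsum_space deg"
    using pp w unfolding poly_pres_def by blast
  then obtain Q where Q: "\<And>t j l. ?v t j l = poly (Q j l) t" and deg_Q: "\<And>j l. degree (Q j l) \<le> ?E"
    using dsum_act_line_mat_poly[where g = g] by blast
  obtain n where "fin_block n g"
    using g unfolding gl_inf_def by blast
  then obtain B where B: "finite B" "card B = Suc ?E" "B \<subseteq> {t. line_mat g t \<in> gl_inf}"
    using infinite_arbitrarily_large[OF infinite_line_mat_in_gl_inf] by blast
  define c where "c i j l = coeff (Q j l) i" for i j l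
  \<comment> \<open>By interpolation at the points of \<open>B\<close>, each coefficient vector is a combination of vectors of \<open>W\<close>.\<close>
  have c_in_W: "c i \<in> W" for i
  proof -
    have "c i j l = (\<Sum>b\<in>B. coeff (lagrange_basis B b) i * ?v b j l)" for j l
      using coeff_eq_sum_lagrange_basis[OF B(1), of "Q j l" i] deg_Q[of j l] B(2)
      by (simp add: c_def Q mult.commute)
    then have "c i = (\<lambda>j l. \<Sum>b\<in>B. coeff (lagrange_basis B b) i * ?v b j l)"
      by blast
    moreover have "?v b \<in> W" if "b \<in> B" for b
      using pp w B(3) that unfolding poly_pres_def by blast
    ultimately show ?thesis
      using poly_pres_lincomb[OF pp B(1), of ?v "\<lambda>b. coeff (lagrange_basis B b) i"] by simp
  qed
  have orbit: "\<rho> (line_mat g t) (f w) = (\<Sum>i\<le>?E. sc (t ^ i) (f (c i)))" if t: "line_mat g t \<in> gl_inf" for t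
  proof -
    have "?v t = (\<lambda>j l. \<Sum>i\<le>?E. t ^ i * c i j l)"
      by (intro ext) (simp add: Q c_def poly_eq_sum_coeff_le[OF deg_Q] mult.commute)
    then have "f (?v t) = (\<Sum>i\<le>?E. sc (t ^ i) (f (c i)))"
      using poly_pres_lincomb[OF pp finite_atMost, where u = c and c = "\<lambda>i. t ^ i"] c_in_W by simp
    moreover have "f (?v t) = \<rho> (line_mat g t) (f w)"
      using pp w t unfolding poly_pres_def by blast
    ultimately show ?thesis
      by simp
  qed
  have vanish: "f (c i) = 0" if "?E < i" for i
  proof -
    have "c i = (\<lambda>j l. 0)"
      by (intro ext) (simp add: c_def coeff_eq_0[OF le_less_trans[OF deg_Q that]])
    then show ?thesis
      using poly_pres_zero[OF pp] by simp
  qed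
  show "\<exists>x. (\<forall>i>?E. x i = 0) \<and> (\<forall>t. line_mat g t \<in> gl_inf \<longrightarrow> \<rho> (line_mat g t) (f w) = (\<Sum>i\<le>?E. sc (t ^ i) (x i)))"
    by (intro exI[of _ "\<lambda>i. f (c i)"]) (simp add: orbit vanish)
qed

lemma poly_rep_line_orbit_degree_le:
  fixes J :: "'j itself"
  assumes "poly_rep J sc \<rho>"
  obtains E where "line_orbit_degree_le sc \<rho> v E"
proof -
  obtain deg :: "'j \<Rightarrow> nat" and W f where pp: "poly_pres sc \<rho> deg W f"
    using assms unfolding poly_rep_def by blast
  then obtain w where w: "w \<in> W" "f w = v"
    unfolding poly_pres_def by (metis UNIV_I imageE)
  show ?thesis
    using poly_pres_line_orbit_degree_le[OF pp w(1)] unfolding w(2) by (rule that)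
qed

lemma (in Vector_Spaces.vector_space) sum_power_scale_at_0: "(\<Sum>i\<le>n. scale (0 ^ i) (x i)) = x 0"
  by (induction n) simp_all

lemma line_orbit_degree_leE:
  assumes "line_orbit_degree_le sc \<rho> v E" and rep: "gl_rep sc \<rho>" and g: "g \<in> gl_inf"
  obtains x where "\<forall>i>E. x i = 0"
    and "\<forall>t. line_mat g t \<in> gl_inf \<longrightarrow> \<rho> (line_mat g t) v = (\<Sum>i\<le>E. sc (t ^ i) (x i))"
    and "x 0 = v" and "\<rho> g v = (\<Sum>i\<le>E. x i)"
proof -
  interpret Vector_Spaces.vector_space sc
    using rep unfolding gl_rep_def by blast
  obtain x where x: "\<forall>i>E. x i = 0"
    "\<forall>t. line_mat g t \<in> gl_inf \<longrightarrow> \<rho> (line_mat g t) v = (\<Sum>i\<le>E. sc (t ^ i) (x i))"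
    using assms(1) g unfolding line_orbit_degree_le_def by blast
  have "v = (\<Sum>i\<le>E. sc (0 ^ i) (x i))"
    using x(2)[rule_format, of 0] idm_in_gl_inf rep unfolding gl_rep_def by simp
  then have "x 0 = v"
    by (simp add: sum_power_scale_at_0)
  moreover have "\<rho> g v = (\<Sum>i\<le>E. x i)"
    using x(2)[rule_format, of 1] g by simp
  ultimately show ?thesis
    using x that by blast
qed

subsection \<open>Annihilation\<close>

lemma (in Modules.module) scale_sum_powers_mult:
  assumes "\<And>i. K < i \<Longrightarrow> \<alpha> i = 0" and "\<And>j. L < j \<Longrightarrow> \<mu> j = 0"
  shows "scale (\<Sum>i\<le>K. x ^ i * \<alpha> i) (\<Sum>j\<le>L. scale (x ^ j) (\<mu> j))
       = (\<Sum>k\<le>K + L. scale (x ^ k) (\<Sum>i\<le>k. scale (\<alpha> i) (\<mu> (k - i))))"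
proof -
  let ?h = "\<lambda>i j. scale (x ^ (i + j) * \<alpha> i) (\<mu> j)"
  have "scale (\<Sum>i\<le>K. x ^ i * \<alpha> i) (\<Sum>j\<le>L. scale (x ^ j) (\<mu> j))
      = (\<Sum>i\<le>K. \<Sum>j\<le>L. scale (x ^ i * \<alpha> i) (scale (x ^ j) (\<mu> j)))"
    by (subst scale_sum_left) (simp only: scale_sum_right)
  also have "\<dots> = (\<Sum>i\<le>K. \<Sum>j\<le>L. ?h i j)"
    by (simp add: power_add mult_ac)
  also have "\<dots> = (\<Sum>(i, j)\<in>{..K} \<times> {..L}. ?h i j)"
    by (rule sum.cartesian_product)
  also have "\<dots> = (\<Sum>(i, j)\<in>{(i, j). i + j \<le> K + L}. ?h i j)"
  proof (rule sum.mono_neutral_left)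
    show "finite {(i, j). i + j \<le> K + L}"
      by (rule finite_subset[of _ "{..K + L} \<times> {..K + L}"]) auto
    show "\<forall>p\<in>{(i, j). i + j \<le> K + L} - {..K} \<times> {..L}. (\<lambda>(i, j). ?h i j) p = 0"
    proof
      fix p
      assume p: "p \<in> {(i, j). i + j \<le> K + L} - {..K} \<times> {..L}"
      obtain i j where ij: "p = (i, j)"
        by fastforce
      with p have "K < i \<or> L < j"
        by auto
      then show "(\<lambda>(i, j). ?h i j) p = 0"
        using assms ij by auto
    qed
  qed auto
  also have "\<dots> = (\<Sum>k\<le>K + L. \<Sum>i\<le>k. ?h i (k - i))"
    by (rule sum.triangle_reindex_eq)
  also have "\<dots> = (\<Sum>k\<le>K + L. scale (x ^ k) (\<Sum>i\<le>k. scale (\<alpha> i) (\<mu> (k - i))))"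
    by (auto simp: scale_sum_right intro!: sum.cong)
  finally show ?thesis .
qed

lemma (in Modules.module) cauchy_product_eq_0_imp_scale_power_eq_0:
  assumes conv: "\<And>k. (\<Sum>i\<le>k. scale (\<alpha> i) (\<mu> (k - i))) = 0"
  shows "scale (\<alpha> 0 ^ Suc j) (\<mu> j) = 0"
proof (induction j rule: less_induct)
  case (less j)
  show ?case
  proof (cases j)
    case 0
    then show ?thesis
      using conv[of 0] by simp
  next
    case (Suc j')
    have "scale (\<alpha> 0) (\<mu> j) = - (\<Sum>i\<le>j'. scale (\<alpha> (Suc i)) (\<mu> (j' - i)))"
      using conv[of j] unfolding Suc sum.atMost_Suc_shift by (simp add: eq_neg_iff_add_eq_0)
    moreover have "scale (\<alpha> 0 ^ j * \<alpha> (Suc i)) (\<mu> (j' - i)) = 0" if "i \<le> j'" for i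
    proof -
      have "j = i + Suc (j' - i)"
        using that Suc by simp
      then have "\<alpha> 0 ^ j = \<alpha> 0 ^ i * \<alpha> 0 ^ Suc (j' - i)"
        by (metis power_add)
      then have "scale (\<alpha> 0 ^ j * \<alpha> (Suc i)) (\<mu> (j' - i))
          = scale (\<alpha> 0 ^ i * \<alpha> (Suc i)) (scale (\<alpha> 0 ^ Suc (j' - i)) (\<mu> (j' - i)))"
        by (simp add: mult_ac)
      also have "\<dots> = 0"
        using less.IH[of "j' - i"] Suc by simp
      finally show ?thesis .
    qed
    ultimately have "scale (\<alpha> 0 ^ j) (scale (\<alpha> 0) (\<mu> j)) = 0"
      by (simp add: scale_sum_right)
    then show ?thesis
      by (simp add: mult.commute)
  qed
qed

lemma (in Modules.module) cauchy_product_eq_0_imp_scale_power_sum_eq_0: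
  assumes "\<And>k. (\<Sum>i\<le>k. scale (\<alpha> i) (\<mu> (k - i))) = 0"
  shows "scale (\<alpha> 0 ^ Suc L) (\<Sum>j\<le>L. \<mu> j) = 0"
proof -
  have "scale (\<alpha> 0 ^ Suc L) (\<mu> j) = 0" if "j \<le> L" for j
  proof -
    have "Suc L = (L - j) + Suc j"
      using that by simp
    then have "scale (\<alpha> 0 ^ Suc L) (\<mu> j) = scale (\<alpha> 0 ^ (L - j) * \<alpha> 0 ^ Suc j) (\<mu> j)"
      by (metis power_add)
    also have "\<dots> = scale (\<alpha> 0 ^ (L - j)) (scale (\<alpha> 0 ^ Suc j) (\<mu> j))"
      by (rule scale_scale[symmetric])
    also have "\<dots> = 0"
      using cauchy_product_eq_0_imp_scale_power_eq_0[OF assms, of j] by simp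
    finally show ?thesis .
  qed
  then show ?thesis
    by (simp add: scale_sum_right)
qed

lemma tca_scale_power_eq_mult:
  assumes "tca J sA \<rho>A"
  shows "sA (c ^ i) x = sA c 1 ^ i * x"
proof -
  interpret Vector_Spaces.vector_space sA
    using assms unfolding tca_def by blast
  have "\<forall>d y z. sA d (y * z) = sA d y * z"
    using assms unfolding tca_def by blast
  then have mult: "sA d y = sA d 1 * y" for d y
    by (metis mult_1)
  have "sA (c ^ i) 1 = sA c 1 ^ i"
  proof (induction i)
    case (Suc i)
    have "sA (c ^ Suc i) 1 = sA c (sA (c ^ i) 1)"
      by simp
    then show ?case
      using Suc mult[of c "sA (c ^ i) 1"] by simp
  qed simp
  then show ?thesis
    using mult[of "c ^ i" x] by simp
qed

lemma tca_module_line_orbit_cauchy_product_eq_0: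
  assumes A: "tca J sA \<rho>A" and M: "tca_module K sA \<rho>A act \<rho>M"
    and am: "act a m = 0" and g: "g \<in> gl_inf"
    and \<alpha>: "\<forall>i>dA. \<alpha> i = 0"
      "\<forall>t. line_mat g t \<in> gl_inf \<longrightarrow> \<rho>A (line_mat g t) a = (\<Sum>i\<le>dA. sA (t ^ i) (\<alpha> i))"
    and \<mu>: "\<forall>j>dM. \<mu> j = 0"
      "\<forall>t. line_mat g t \<in> gl_inf \<longrightarrow> \<rho>M (line_mat g t) m = (\<Sum>j\<le>dM. act (sA (t ^ j) 1) (\<mu> j))"
  shows "(\<Sum>i\<le>k. act (\<alpha> i) (\<mu> (k - i))) = 0"
proof -
  interpret M: Modules.module act
    using M unfolding tca_module_def by blast
  have grM: "gl_rep (\<lambda>c y. act (sA c 1) y) \<rho>M"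
    and equivariant: "\<And>h b y. h \<in> gl_inf \<Longrightarrow> \<rho>M h (act b y) = act (\<rho>A h b) (\<rho>M h y)"
    using M unfolding tca_module_def poly_rep_def by blast+
  let ?\<nu> = "\<lambda>k. \<Sum>i\<le>k. act (\<alpha> i) (\<mu> (k - i))"
  have zero: "(\<Sum>k\<le>dA + dM. act (sA (t ^ k) 1) (?\<nu> k)) = 0" if "t \<in> {t. line_mat g t \<in> gl_inf}" for t
  proof -
    from that have t: "line_mat g t \<in> gl_inf"
      by simp
    interpret L: Vector_Spaces.linear "\<lambda>c y. act (sA c 1) y" "\<lambda>c y. act (sA c 1) y" "\<rho>M (line_mat g t)"
      using grM t unfolding gl_rep_def by blast
    have "0 = \<rho>M (line_mat g t) (act a m)"
      using am by simp
    also have "\<dots> = act (\<rho>A (line_mat g t) a) (\<rho>M (line_mat g t) m)"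
      using equivariant t by blast
    also have "\<dots> = act (\<Sum>i\<le>dA. sA t 1 ^ i * \<alpha> i) (\<Sum>j\<le>dM. act (sA t 1 ^ j) (\<mu> j))"
      using \<alpha> \<mu> t by (simp add: tca_scale_power_eq_mult[OF A])
    also have "\<dots> = (\<Sum>k\<le>dA + dM. act (sA t 1 ^ k) (?\<nu> k))"
      using \<alpha>(1) \<mu>(1) by (intro M.scale_sum_powers_mult) auto
    finally show ?thesis
      by (simp add: tca_scale_power_eq_mult[OF A])
  qed
  obtain n where block: "fin_block n g"
    using g unfolding gl_inf_def by blast
  have vs: "Vector_Spaces.vector_space (\<lambda>c y. act (sA c 1) y)"
    using grM unfolding gl_rep_def by blast
  show ?thesis
  proof (cases "k \<le> dA + dM")
    case True
    with vs infinite_line_mat_in_gl_inf[OF block] zero show ?thesis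
      by (rule vector_space.sum_power_scale_eq_0_imp_eq_0[where x = ?\<nu>])
  next
    case False
    then have "act (\<alpha> i) (\<mu> (k - i)) = 0" if "i \<le> k" for i
      using \<alpha>(1) \<mu>(1) by (cases "dA < i") auto
    then show ?thesis
      by simp
  qed
qed

theorem mainTheorem3:
  fixes sA :: "complex \<Rightarrow> 'a::comm_ring_1 \<Rightarrow> 'a"
    and \<rho>A :: "(nat \<Rightarrow> nat \<Rightarrow> complex) \<Rightarrow> 'a \<Rightarrow> 'a"
    and act :: "'a \<Rightarrow> 'm::ab_group_add \<Rightarrow> 'm"
    and \<rho>M :: "(nat \<Rightarrow> nat \<Rightarrow> complex) \<Rightarrow> 'm \<Rightarrow> 'm"
    and a :: 'a and m :: 'm
  assumes "tca TYPE('j) sA \<rho>A"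
    and "tca_module TYPE('k) sA \<rho>A act \<rho>M"
    and "act a m = 0"
  shows "\<exists>n::nat. n \<ge> 1 \<and> (\<forall>g\<in>gl_inf. act (a ^ n) (\<rho>M g m) = 0)"
proof -
  let ?sM = "\<lambda>c y. act (sA c 1) y"
  interpret M: Modules.module act
    using assms(2) unfolding tca_module_def by blast
  have grA: "gl_rep sA \<rho>A" and repA: "poly_rep TYPE('j) sA \<rho>A"
    using assms(1) unfolding tca_def poly_rep_def by blast+
  have grM: "gl_rep ?sM \<rho>M" and repM: "poly_rep TYPE('k) ?sM \<rho>M"
    using assms(2) unfolding tca_module_def poly_rep_def by blast+
  obtain dA where dA: "line_orbit_degree_le sA \<rho>A a dA"
    using repA by (rule poly_rep_line_orbit_degree_le)
  obtain dM where dM: "line_orbit_degree_le ?sM \<rho>M m dM"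
    using repM by (rule poly_rep_line_orbit_degree_le)
  have "act (a ^ Suc dM) (\<rho>M g m) = 0" if g: "g \<in> gl_inf" for g
  proof -
    obtain \<alpha> where \<alpha>: "\<forall>i>dA. \<alpha> i = 0"
      "\<forall>t. line_mat g t \<in> gl_inf \<longrightarrow> \<rho>A (line_mat g t) a = (\<Sum>i\<le>dA. sA (t ^ i) (\<alpha> i))"
      and \<alpha>0: "\<alpha> 0 = a"
      using dA grA g by (rule line_orbit_degree_leE)
    obtain \<mu> where \<mu>: "\<forall>j>dM. \<mu> j = 0"
      "\<forall>t. line_mat g t \<in> gl_inf \<longrightarrow> \<rho>M (line_mat g t) m = (\<Sum>j\<le>dM. act (sA (t ^ j) 1) (\<mu> j))"
      and gm: "\<rho>M g m = (\<Sum>j\<le>dM. \<mu> j)"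
      using dM grM g by (rule line_orbit_degree_leE)
    have "(\<Sum>i\<le>k. act (\<alpha> i) (\<mu> (k - i))) = 0" for k
      using tca_module_line_orbit_cauchy_product_eq_0[OF assms g \<alpha> \<mu>] .
    then show ?thesis
      using M.cauchy_product_eq_0_imp_scale_power_sum_eq_0[of \<alpha> \<mu> dM] \<alpha>0 gm by simp
  qed
  then show ?thesis
    by (intro exI[of _ "Suc dM"]) auto
qed

end
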